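(* Let $f=c_0x_0^3+c_1x_1^3+c_2x_2^3+c_3x_3^3+c_4x_4^3$ with $x_4:=-x_0-x_1-x_2-x_3$, where exactly one of $c_0,\dots,c_4$ is zero and the other four are nonzero. Then $H(f)$ is a well-defined projective $3$-plane and $H(f)\cap X_2$ consists of $6$ lines (in particular it is not finite, so $f$ lies on the Hessian discriminant).
   Context: $\mathbb{P}^9$ denotes the projective space of quadratic forms in $x_0,\dots,x_3$; $X_2\subset\mathbb{P}^9$ is the variety of quadratic forms of rank $\le2$. For a cubic form $f$ in $x_0,\dots,x_3$ whose four partial derivatives are linearly independent, $H(f)\subset\mathbb{P}^9$ is the projective $3$-plane spanned by $\partial f/\partial x_0,\dots,\partial f/\partial x_3$. $f$ lies on the Hessian discriminant iff $H(f)\cap X_2$ does not consist of $10$ reduced points. *)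

theory Defs
  imports "HOL-Analysis.Analysis"
begin

text \<open>Variables x0,...,x3 are indexed by the type 4 (elements of_nat 0, ..., of_nat 3).
  A quadratic form in x0..x3 is represented by its symmetric coefficient matrix
  M :: complex^4^4, i.e. q(x) = sum_i sum_j M_ij x_i x_j; the space of quadratic forms
  (symmetric matrices) is the affine cone over P^9.  A cubic form is represented by its
  symmetric coefficient tensor T, i.e. f(x) = sum_i sum_j sum_k T i j k x_i x_j x_k.\<close>

definition qform :: "complex^4^4 \<Rightarrow> complex^4 \<Rightarrow> complex" where
  "qform M x = (\<Sum>i\<in>UNIV. \<Sum>j\<in>UNIV. M$i$j * x$i * x$j)"

definition cform :: "(4 \<Rightarrow> 4 \<Rightarrow> 4 \<Rightarrow> complex) \<Rightarrow> complex^4 \<Rightarrow> complex" where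
  "cform T x = (\<Sum>i\<in>UNIV. \<Sum>j\<in>UNIV. \<Sum>k\<in>UNIV. T i j k * x$i * x$j * x$k)"

text \<open>The partial derivative of a cubic form with symmetric tensor T with respect to x_l
  is the quadratic form with coefficient matrix 3 * T l.\<close>

definition dpartial :: "(4 \<Rightarrow> 4 \<Rightarrow> 4 \<Rightarrow> complex) \<Rightarrow> 4 \<Rightarrow> complex^4^4" where
  "dpartial T l = (\<chi> i j. 3 * T l i j)"

text \<open>Linear forms: lin m = x_m for m < 4, and lin 4 = x_4 := -x0-x1-x2-x3.\<close>

definition lin :: "nat \<Rightarrow> complex^4" where
  "lin m = (if m < 4 then axis (of_nat m) 1 else (\<chi> i. -1))"

definition ftensor :: "(nat \<Rightarrow> complex) \<Rightarrow> 4 \<Rightarrow> 4 \<Rightarrow> 4 \<Rightarrow> complex" where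
  "ftensor c i j k = (\<Sum>m<5. c m * lin m $ i * lin m $ j * lin m $ k)"


definition msc :: "complex \<Rightarrow> complex^4^4 \<Rightarrow> complex^4^4" where
  "msc a M = (\<chi> i j. a * M$i$j)"

definition partials_independent :: "(4 \<Rightarrow> 4 \<Rightarrow> 4 \<Rightarrow> complex) \<Rightarrow> bool" where
  "partials_independent T \<longleftrightarrow>
     (\<forall>w :: 4 \<Rightarrow> complex. (\<Sum>l\<in>UNIV. msc (w l) (dpartial T l)) = 0 \<longrightarrow> (\<forall>l. w l = 0))"

text \<open>Affine cone over H(f): the linear span of the partial derivatives.\<close>

definition Hcone :: "(4 \<Rightarrow> 4 \<Rightarrow> 4 \<Rightarrow> complex) \<Rightarrow> (complex^4^4) set" where
  "Hcone T = {(\<Sum>l\<in>UNIV. msc (w l) (dpartial T l)) | w. True}"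

text \<open>Affine cone over X_2: quadratic forms of rank at most 2.\<close>

definition X2cone :: "(complex^4^4) set" where
  "X2cone = {M. rank M \<le> 2}"

text \<open>Affine cone over a projective line in P^9: a 2-dimensional linear subspace.\<close>

definition is_line :: "(complex^4^4) set \<Rightarrow> bool" where
  "is_line L \<longleftrightarrow> (\<exists>P Q. (\<forall>a b. msc a P + msc b Q = 0 \<longrightarrow> a = 0 \<and> b = 0) \<and>
                          L = {msc a P + msc b Q | a b. True})"

end

theory Submission
  imports Defs
begin

text \<open>Write \<open>\<ell>\<^sub>0, \<dots>, \<ell>\<^sub>4\<close> for the linear forms \<open>x\<^sub>0, \<dots>, x\<^sub>4\<close>, so that
  \<open>f = \<Sum> c\<^sub>m \<ell>\<^sub>m\<^sup>3\<close> and \<open>\<Sum>\<^sub>l w\<^sub>l \<partial>f/\<partial>x\<^sub>l = 3 \<Sum>\<^sub>m c\<^sub>m \<ell>\<^sub>m(w) \<ell>\<^sub>m\<^sup>2\<close>.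
  Any four of the five forms are a basis of the dual space. Dropping the one with \<open>c\<^sub>j = 0\<close>,
  the remaining values \<open>\<ell>\<^sub>m(w)\<close> range freely over \<open>\<complex>\<^sup>4\<close> and determine \<open>w\<close>, so
  \<open>H(f)\<close> is the four-dimensional space of quadratic forms diagonal in that basis. A diagonal form
  \<open>\<Sum> u\<^sub>r \<ell>\<^sub>r\<^sup>2\<close> has rank equal to the number of nonzero \<open>u\<^sub>r\<close>; hence rank
  at most 2 occurs exactly on the six lines \<open>\<langle>\<ell>\<^sub>p\<^sup>2, \<ell>\<^sub>q\<^sup>2\<rangle>\<close>.\<close>

definition dot :: "'a::comm_semiring_1^'n \<Rightarrow> 'a^'n \<Rightarrow> 'a" where
  "dot v w = (\<Sum>i\<in>UNIV. v$i * w$i)"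

definition weighted_outer_sum :: "nat \<Rightarrow> (nat \<Rightarrow> 'a::comm_semiring_1^'n) \<Rightarrow> (nat \<Rightarrow> 'a) \<Rightarrow> 'a^'n^'n" where
  "weighted_outer_sum N V u = (\<chi> i k. \<Sum>r<N. u r * V r $ i * V r $ k)"

definition biorthogonal :: "nat \<Rightarrow> (nat \<Rightarrow> 'a::comm_semiring_1^'n) \<Rightarrow> (nat \<Rightarrow> 'a^'n) \<Rightarrow> bool" where
  "biorthogonal N V W \<longleftrightarrow> (\<forall>r<N. \<forall>s<N. dot (V r) (W s) = (if r = s then 1 else 0))"

definition supported_sums :: "nat \<Rightarrow> (nat \<Rightarrow> 'a::comm_semiring_1^'n) \<Rightarrow> nat set \<Rightarrow> ('a^'n^'n) set" where
  "supported_sums N V P = {weighted_outer_sum N V u | u. \<forall>r<N. u r \<noteq> 0 \<longrightarrow> r \<in> P}"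

lemma dot_sum_left: "dot (\<Sum>a\<in>A. g a) w = (\<Sum>a\<in>A. dot (g a) w)"
  by (simp add: dot_def sum_distrib_right) (rule sum.swap)

lemma dot_sum_right: "dot v (\<Sum>a\<in>A. g a) = (\<Sum>a\<in>A. dot v (g a))"
  by (simp add: dot_def sum_distrib_left) (rule sum.swap)

lemma dot_scale_left: "dot (c *s v) w = c * dot v w"
  by (simp add: dot_def sum_distrib_left mult.assoc)

lemma dot_scale_right: "dot v (c *s w) = c * dot v w"
  by (simp add: dot_def sum_distrib_left ac_simps)

lemma biorthogonal_dot_sum:
  assumes "biorthogonal N V W" "r < N"
  shows "dot (V r) (\<Sum>s<N. a s *s W s) = a r"
proof -
  have "dot (V r) (\<Sum>s<N. a s *s W s) = (\<Sum>s<N. if s = r then a s else 0)"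
    unfolding dot_sum_right dot_scale_right using assms
    by (intro sum.cong) (auto simp: biorthogonal_def)
  also have "\<dots> = a r" using assms(2) by simp
  finally show ?thesis .
qed

lemma biorthogonal_inj_on: "biorthogonal N V W \<Longrightarrow> inj_on V {..<N}"
  unfolding inj_on_def biorthogonal_def by (metis lessThan_iff zero_neq_one)

lemma biorthogonal_independent:
  fixes V :: "nat \<Rightarrow> 'a::field^'n"
  assumes bi: "biorthogonal N V W" and Z: "Z \<subseteq> {..<N}"
  shows "vec.independent (V ` Z)"
proof (rule vec.independent_if_scalars_zero)
  show "finite (V ` Z)" using Z finite_subset by blast
  fix f x assume comb: "(\<Sum>x\<in>V ` Z. f x *s x) = 0" and "x \<in> V ` Z"
  then obtain s where s: "s \<in> Z" "x = V s" by auto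
  have inj: "inj_on V Z" using biorthogonal_inj_on[OF bi] Z inj_on_subset by blast
  have "0 = dot (\<Sum>x\<in>V ` Z. f x *s x) (W s)" using comb by (simp add: dot_def)
  also have "\<dots> = (\<Sum>r\<in>Z. if r = s then f (V s) else 0)"
    unfolding dot_sum_left dot_scale_left sum.reindex[OF inj] using bi Z s(1)
    by (intro sum.cong) (auto simp: biorthogonal_def dot_scale_left subset_iff)
  also have "\<dots> = f x" using s Z finite_subset[OF Z] by simp
  finally show "f x = 0" by simp
qed

lemma row_weighted_outer_sum: "row i (weighted_outer_sum N V u) = (\<Sum>r<N. (u r * V r $ i) *s V r)"
  by (simp add: row_def vec_eq_iff weighted_outer_sum_def mult.assoc)

lemma biorthogonal_row_combination:
  assumes "biorthogonal N V W" "s < N"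
  shows "(\<Sum>i\<in>UNIV. W s $ i *s row i (weighted_outer_sum N V u)) = u s *s V s"
proof -
  have "(\<Sum>i\<in>UNIV. W s $ i *s row i (weighted_outer_sum N V u)) = (\<Sum>r<N. (u r * dot (V r) (W s)) *s V r)"
    by (simp add: row_weighted_outer_sum vec_eq_iff sum_distrib_left dot_def sum_distrib_right
        sum.swap[of _ UNIV] ac_simps)
  also have "\<dots> = (\<Sum>r<N. if r = s then u s *s V s else 0)"
    using assms by (intro sum.cong) (auto simp: biorthogonal_def)
  also have "\<dots> = u s *s V s" using assms(2) by simp
  finally show ?thesis .
qed

lemma weighted_outer_sum_coeff_eq:
  assumes "biorthogonal N V W" "weighted_outer_sum N V u = weighted_outer_sum N V u'" "s < N"
  shows "u s = u' s"
proof -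
  have "u s *s V s = u' s *s V s"
    using biorthogonal_row_combination[OF assms(1,3)] assms(2) by metis
  then have "dot (u s *s V s) (W s) = dot (u' s *s V s) (W s)" by simp
  then show ?thesis using assms(1,3) by (simp add: dot_scale_left biorthogonal_def)
qed

lemma weighted_outer_sum_cong:
  "(\<And>r. r < N \<Longrightarrow> u r = u' r) \<Longrightarrow> weighted_outer_sum N V u = weighted_outer_sum N V u'"
  unfolding weighted_outer_sum_def by (simp add: vec_eq_iff)

lemma weighted_outer_sum_add:
  "weighted_outer_sum N V u + weighted_outer_sum N V u' = weighted_outer_sum N V (\<lambda>r. u r + u' r)"
  by (simp add: weighted_outer_sum_def vec_eq_iff sum.distrib algebra_simps)

lemma weighted_outer_sum_zero: "weighted_outer_sum N V (\<lambda>_. 0) = 0"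
  by (simp add: weighted_outer_sum_def vec_eq_iff)

lemma rank_weighted_outer_sum:
  fixes V :: "nat \<Rightarrow> 'a::field^'n"
  assumes bi: "biorthogonal N V W"
  shows "rank (weighted_outer_sum N V u) = card {r. r < N \<and> u r \<noteq> 0}"
proof -
  define Z where "Z = {r. r < N \<and> u r \<noteq> 0}"
  have Z: "Z \<subseteq> {..<N}" by (auto simp: Z_def)
  have card_VZ: "card (V ` Z) = card Z"
    using biorthogonal_inj_on[OF bi] Z by (intro card_image) (rule inj_on_subset)
  have "rows (weighted_outer_sum N V u) \<subseteq> vec.span (V ` Z)"
  proof
    fix x assume "x \<in> rows (weighted_outer_sum N V u)"
    then obtain i where x: "x = row i (weighted_outer_sum N V u)" by (auto simp: rows_def)
    have "(u r * V r $ i) *s V r \<in> vec.span (V ` Z)" if "r < N" for r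
      using that by (cases "u r = 0") (auto simp: Z_def vec.span_zero intro: vec.span_scale vec.span_base)
    then show "x \<in> vec.span (V ` Z)"
      unfolding x row_weighted_outer_sum by (auto intro: vec.span_sum)
  qed
  then have "rank (weighted_outer_sum N V u) \<le> card Z"
    unfolding row_rank_def_gen card_VZ[symmetric]
    by (rule vec.dim_le_card) (use Z finite_subset in blast)
  moreover have "V ` Z \<subseteq> vec.span (rows (weighted_outer_sum N V u))"
  proof
    fix x assume "x \<in> V ` Z"
    then obtain s where s: "s < N" "u s \<noteq> 0" "x = V s" by (auto simp: Z_def)
    have "(\<Sum>i\<in>UNIV. (W s $ i / u s) *s row i (weighted_outer_sum N V u))
        = inverse (u s) *s (\<Sum>i\<in>UNIV. W s $ i *s row i (weighted_outer_sum N V u))"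
      by (simp add: vec_eq_iff sum_distrib_left divide_inverse ac_simps)
    also have "\<dots> = V s"
      using biorthogonal_row_combination[OF bi s(1)] s(2) by simp
    finally have "(\<Sum>i\<in>UNIV. (W s $ i / u s) *s row i (weighted_outer_sum N V u)) = V s" .
    moreover have "(\<Sum>i\<in>UNIV. (W s $ i / u s) *s row i (weighted_outer_sum N V u))
        \<in> vec.span (rows (weighted_outer_sum N V u))"
      by (intro vec.span_sum vec.span_scale vec.span_base) (auto simp: rows_def)
    ultimately show "x \<in> vec.span (rows (weighted_outer_sum N V u))" using s(3) by simp
  qed
  then have "card Z \<le> rank (weighted_outer_sum N V u)"
    using vec.independent_card_le_dim[OF _ biorthogonal_independent[OF bi Z]] card_VZ
    by (metis row_rank_def_gen vec.dim_span)
  ultimately show ?thesis by (simp add: Z_def)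
qed

lemma weighted_outer_sum_in_supported_sums:
  "(\<And>r. r < N \<Longrightarrow> u r \<noteq> 0 \<Longrightarrow> r \<in> P) \<Longrightarrow> weighted_outer_sum N V u \<in> supported_sums N V P"
  unfolding supported_sums_def by blast

lemma mem_of_supported_sums_subset:
  assumes bi: "biorthogonal N V W" and "p \<in> P" "p < N"
    and eq: "supported_sums N V P \<subseteq> supported_sums N V Q"
  shows "p \<in> Q"
proof -
  have "weighted_outer_sum N V (\<lambda>r. of_bool (r = p)) \<in> supported_sums N V Q"
    using eq \<open>p \<in> P\<close> by (intro subsetD[OF eq] weighted_outer_sum_in_supported_sums) auto
  then obtain u where u: "weighted_outer_sum N V (\<lambda>r. of_bool (r = p)) = weighted_outer_sum N V u"
    and supp: "\<forall>r<N. u r \<noteq> 0 \<longrightarrow> r \<in> Q"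
    unfolding supported_sums_def by blast
  have "u p = 1" using weighted_outer_sum_coeff_eq[OF bi u \<open>p < N\<close>] by simp
  then show ?thesis using supp \<open>p < N\<close> by auto
qed

lemma supported_sums_inj:
  assumes "biorthogonal N V W" "P \<subseteq> {..<N}" "Q \<subseteq> {..<N}"
    and "supported_sums N V P = supported_sums N V Q"
  shows "P = Q"
  using mem_of_supported_sums_subset[OF assms(1)] assms(2-4) by (metis equalityI lessThan_iff subsetD subsetI order_refl)

definition skip :: "nat \<Rightarrow> nat \<Rightarrow> nat" where
  "skip j r = (if r < j then r else Suc r)"

lemma bij_betw_skip: "j \<le> N \<Longrightarrow> bij_betw (skip j) {..<N} ({..<Suc N} - {j})"
proof (rule bij_betw_imageI)
  show "inj_on (skip j) {..<N}" by (auto simp: inj_on_def skip_def split: if_splits)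
  assume "j \<le> N"
  show "skip j ` {..<N} = {..<Suc N} - {j}"
  proof (intro equalityI subsetI)
    fix m assume "m \<in> {..<Suc N} - {j}"
    then have "m = skip j (if m < j then m else m - 1)" "(if m < j then m else m - 1) < N"
      using \<open>j \<le> N\<close> by (auto simp: skip_def)
    then show "m \<in> skip j ` {..<N}" by blast
  qed (auto simp: skip_def)
qed

lemma sum_lessThan_Suc_skip: "j \<le> N \<Longrightarrow> (\<Sum>m<Suc N. g m) = g j + (\<Sum>r<N. g (skip j r))"
  by (simp add: sum.remove[of "{..<Suc N}" j] sum.reindex_bij_betw[OF bij_betw_skip] del: sum.lessThan_Suc)

lemma weighted_outer_sum_skip:
  assumes "j \<le> N" "u j = 0"
  shows "weighted_outer_sum (Suc N) V u = weighted_outer_sum N (V \<circ> skip j) (u \<circ> skip j)"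
  using assms by (simp add: weighted_outer_sum_def vec_eq_iff sum_lessThan_Suc_skip del: sum.lessThan_Suc)

definition other_forms :: "nat \<Rightarrow> nat \<Rightarrow> complex^4" where
  "other_forms j = lin \<circ> skip j"

definition dual_forms :: "nat \<Rightarrow> nat \<Rightarrow> complex^4" where
  "dual_forms j r =
     (if j = 4 then axis (of_nat r) 1
      else if skip j r = 4 then - axis (of_nat j) 1
      else axis (of_nat (skip j r)) 1 - axis (of_nat j) 1)"

lemma less_4_cases: "r < 4 \<Longrightarrow> r = 0 \<or> r = 1 \<or> r = 2 \<or> r = (3::nat)"
  by auto

lemma less_5_cases: "j < 5 \<Longrightarrow> j = 0 \<or> j = 1 \<or> j = 2 \<or> j = 3 \<or> j = (4::nat)"
  by auto

lemma biorthogonal_other_forms: "j < 5 \<Longrightarrow> biorthogonal 4 (other_forms j) (dual_forms j)"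
  unfolding biorthogonal_def
proof (intro allI impI)
  fix r s :: nat assume "j < 5" "r < 4" "s < 4"
  show "dot (other_forms j r) (dual_forms j s) = (if r = s then 1 else 0)"
    using less_5_cases[OF \<open>j < 5\<close>] less_4_cases[OF \<open>r < 4\<close>] less_4_cases[OF \<open>s < 4\<close>]
    by (elim disjE) (simp_all add: dot_def other_forms_def dual_forms_def skip_def lin_def sum_4 axis_def)
qed

lemma other_forms_dot_eq_zero:
  assumes "j < 5" "\<And>r. r < 4 \<Longrightarrow> dot (other_forms j r) x = 0"
  shows "x = 0"
proof -
  have "dot (other_forms j 0) x = 0" "dot (other_forms j 1) x = 0"
    "dot (other_forms j 2) x = 0" "dot (other_forms j 3) x = 0"
    using assms(2) by auto
  then show ?thesis
    using less_5_cases[OF assms(1)]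
    by (elim disjE) (simp_all add: vec_eq_iff forall_4 dot_def other_forms_def skip_def lin_def sum_4 axis_def)
qed

lemma partials_combination:
  "(\<Sum>l\<in>UNIV. msc (w l) (dpartial (ftensor c) l))
     = weighted_outer_sum 5 lin (\<lambda>m. 3 * c m * dot (lin m) (vec_lambda w))"
proof -
  have "(\<Sum>l\<in>UNIV. w l * (3 * (\<Sum>m<5. c m * lin m $ l * lin m $ i * lin m $ k)))
      = (\<Sum>m<5. 3 * c m * (\<Sum>l\<in>UNIV. lin m $ l * w l) * lin m $ i * lin m $ k)" for i k
    by (simp add: sum_distrib_left sum_distrib_right algebra_simps) (rule sum.swap)
  then show ?thesis
    by (simp add: vec_eq_iff msc_def dpartial_def ftensor_def weighted_outer_sum_def dot_def)
qed

lemma partials_combination_other_forms: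
  assumes "j < 5" "c j = 0"
  shows "(\<Sum>l\<in>UNIV. msc (w l) (dpartial (ftensor c) l))
     = weighted_outer_sum 4 (other_forms j) (\<lambda>r. 3 * c (skip j r) * dot (other_forms j r) (vec_lambda w))"
  using weighted_outer_sum_skip[of j 4 "\<lambda>m. 3 * c m * dot (lin m) (vec_lambda w)" lin] assms
  by (simp add: partials_combination other_forms_def comp_def numeral_eq_Suc)

lemma Hcone_ftensor:
  assumes "j < 5" "c j = 0" "\<forall>m<5. m \<noteq> j \<longrightarrow> c m \<noteq> 0"
  shows "Hcone (ftensor c) = range (weighted_outer_sum 4 (other_forms j))"
proof (intro equalityI subsetI)
  fix M assume "M \<in> Hcone (ftensor c)"
  then show "M \<in> range (weighted_outer_sum 4 (other_forms j))"
    unfolding Hcone_def using partials_combination_other_forms[of j c, OF assms(1,2)] by auto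
next
  fix M assume "M \<in> range (weighted_outer_sum 4 (other_forms j))"
  then obtain u where M: "M = weighted_outer_sum 4 (other_forms j) u" by auto
  define x where "x = (\<Sum>s<4. (u s / (3 * c (skip j s))) *s dual_forms j s)"
  have "c (skip j r) \<noteq> 0" if "r < 4" for r
    using assms(3) that by (auto simp: skip_def)
  then have "3 * c (skip j r) * dot (other_forms j r) x = u r" if "r < 4" for r
    using biorthogonal_dot_sum[OF biorthogonal_other_forms[OF assms(1)] that] that by (simp add: x_def)
  then have "M = (\<Sum>l\<in>UNIV. msc (x $ l) (dpartial (ftensor c) l))"
    unfolding M partials_combination_other_forms[of j c, OF assms(1,2)] vec_nth_inverse
    by (intro weighted_outer_sum_cong) simp
  then show "M \<in> Hcone (ftensor c)" unfolding Hcone_def by blast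
qed

lemma partials_independent_ftensor:
  assumes "j < 5" "c j = 0" "\<forall>m<5. m \<noteq> j \<longrightarrow> c m \<noteq> 0"
  shows "partials_independent (ftensor c)"
  unfolding partials_independent_def
proof (intro allI impI)
  fix w :: "4 \<Rightarrow> complex" and l
  assume "(\<Sum>l\<in>UNIV. msc (w l) (dpartial (ftensor c) l)) = 0"
  then have zero: "weighted_outer_sum 4 (other_forms j) (\<lambda>r. 3 * c (skip j r) * dot (other_forms j r) (vec_lambda w))
      = weighted_outer_sum 4 (other_forms j) (\<lambda>_. 0)"
    by (simp add: partials_combination_other_forms[of j c, OF assms(1,2)] weighted_outer_sum_zero)
  have "dot (other_forms j r) (vec_lambda w) = 0" if "r < 4" for r
    using weighted_outer_sum_coeff_eq[OF biorthogonal_other_forms[OF assms(1)] zero that] that assms(3)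
    by (auto simp: skip_def)
  then have "vec_lambda w = 0" by (rule other_forms_dot_eq_zero[OF assms(1)])
  then show "w l = 0" by (metis vec_lambda_beta zero_index)
qed

lemma msc_weighted_outer_sum: "msc a (weighted_outer_sum N V u) = weighted_outer_sum N V (\<lambda>r. a * u r)"
  by (simp add: msc_def weighted_outer_sum_def vec_eq_iff sum_distrib_left mult.assoc)

lemma is_line_supported_sums:
  fixes V :: "nat \<Rightarrow> complex^4"
  assumes bi: "biorthogonal N V W" and "p < N" "q < N" "p \<noteq> q"
  shows "is_line (supported_sums N V {p, q})"
proof -
  define P where "P = weighted_outer_sum N V (\<lambda>r. of_bool (r = p))"
  define Q where "Q = weighted_outer_sum N V (\<lambda>r. of_bool (r = q))"
  have comb: "msc a P + msc b Q = weighted_outer_sum N V (\<lambda>r. a * of_bool (r = p) + b * of_bool (r = q))"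
    for a b by (simp add: P_def Q_def msc_weighted_outer_sum weighted_outer_sum_add)
  show ?thesis
    unfolding is_line_def
  proof (intro exI conjI allI impI)
    fix a b assume "msc a P + msc b Q = 0"
    then have zero: "weighted_outer_sum N V (\<lambda>r. a * of_bool (r = p) + b * of_bool (r = q))
        = weighted_outer_sum N V (\<lambda>_. 0)"
      by (simp add: comb weighted_outer_sum_zero)
    show "a = 0" using weighted_outer_sum_coeff_eq[OF bi zero \<open>p < N\<close>] \<open>p \<noteq> q\<close> by simp
    show "b = 0" using weighted_outer_sum_coeff_eq[OF bi zero \<open>q < N\<close>] \<open>p \<noteq> q\<close> by simp
  next
    show "supported_sums N V {p, q} = {msc a P + msc b Q | a b. True}"
    proof (intro equalityI subsetI)
      fix M assume "M \<in> supported_sums N V {p, q}"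
      then obtain u where M: "M = weighted_outer_sum N V u" and supp: "\<forall>r<N. u r \<noteq> 0 \<longrightarrow> r \<in> {p, q}"
        unfolding supported_sums_def by blast
      have "M = msc (u p) P + msc (u q) Q"
        unfolding M comb using supp \<open>p \<noteq> q\<close> by (intro weighted_outer_sum_cong) auto
      then show "M \<in> {msc a P + msc b Q | a b. True}" by blast
    next
      fix M assume "M \<in> {msc a P + msc b Q | a b. True}"
      then show "M \<in> supported_sums N V {p, q}"
        by (auto simp: comb intro!: weighted_outer_sum_in_supported_sums)
    qed
  qed
qed

definition coordinate_pair :: "nat \<Rightarrow> nat set" where
  "coordinate_pair i = [{0, 1}, {0, 2}, {0, 3}, {1, 2}, {1, 3}, {2, 3}] ! i"

lemma less_6_cases: "i < 6 \<Longrightarrow> i = 0 \<or> i = 1 \<or> i = 2 \<or> i = 3 \<or> i = 4 \<or> i = (5::nat)"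
  by auto

lemma coordinate_pair_subset_card: "i < 6 \<Longrightarrow> coordinate_pair i \<subseteq> {..<4} \<and> card (coordinate_pair i) = 2"
  by (drule less_6_cases) (auto simp: coordinate_pair_def)

lemma coordinate_pair_eq:
  assumes "i < 6"
  obtains p q where "coordinate_pair i = {p, q}" "p < 4" "q < 4" "p \<noteq> q"
  using coordinate_pair_subset_card[OF assms] by (auto simp: card_2_iff)

lemma inj_on_coordinate_pair: "inj_on coordinate_pair {..<6}"
  unfolding inj_on_def
  by (auto dest!: less_6_cases simp: coordinate_pair_def doubleton_eq_iff)

lemma subset_coordinate_pair:
  assumes "Z \<subseteq> {..<4}" "card Z \<le> 2"
  shows "\<exists>i<6. Z \<subseteq> coordinate_pair i"
proof -
  have "\<forall>Z\<in>Pow {0, 1, 2, 3::nat}. card Z \<le> 2 \<longrightarrow> (\<exists>i\<in>{0, 1, 2, 3, 4, 5}. Z \<subseteq> coordinate_pair i)"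
    by (simp add: Pow_insert coordinate_pair_def insert_commute)
  moreover have "Z \<in> Pow {0, 1, 2, 3}" using assms(1) by auto
  ultimately obtain i where "i \<in> {0, 1, 2, 3, 4, 5::nat}" "Z \<subseteq> coordinate_pair i"
    using assms(2) by blast
  then show ?thesis by (intro exI[of _ i]) auto
qed

lemma range_weighted_outer_sum_inter_X2cone:
  fixes V :: "nat \<Rightarrow> complex^4"
  assumes bi: "biorthogonal 4 V W"
  shows "range (weighted_outer_sum 4 V) \<inter> X2cone = (\<Union>i<6. supported_sums 4 V (coordinate_pair i))"
proof (intro equalityI subsetI)
  fix M assume "M \<in> range (weighted_outer_sum 4 V) \<inter> X2cone"
  then obtain u where M: "M = weighted_outer_sum 4 V u" and "rank M \<le> 2"
    by (auto simp: X2cone_def)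
  then have "card {r. r < 4 \<and> u r \<noteq> 0} \<le> 2" by (simp add: rank_weighted_outer_sum[OF bi])
  then obtain i where "i < 6" "{r. r < 4 \<and> u r \<noteq> 0} \<subseteq> coordinate_pair i"
    using subset_coordinate_pair[of "{r. r < 4 \<and> u r \<noteq> 0}"] by auto
  then show "M \<in> (\<Union>i<6. supported_sums 4 V (coordinate_pair i))"
    unfolding M by (auto intro!: weighted_outer_sum_in_supported_sums)
next
  fix M assume "M \<in> (\<Union>i<6. supported_sums 4 V (coordinate_pair i))"
  then obtain i u where "i < 6" and M: "M = weighted_outer_sum 4 V u"
    and supp: "{r. r < 4 \<and> u r \<noteq> 0} \<subseteq> coordinate_pair i"
    by (auto simp: supported_sums_def)
  have "card {r. r < 4 \<and> u r \<noteq> 0} \<le> 2"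
    using card_mono[OF _ supp] coordinate_pair_subset_card[OF \<open>i < 6\<close>] card.infinite by fastforce
  then show "M \<in> range (weighted_outer_sum 4 V) \<inter> X2cone"
    by (simp add: M X2cone_def rank_weighted_outer_sum[OF bi])
qed

theorem mainTheorem4:
  fixes c :: "nat \<Rightarrow> complex" and j :: nat
  assumes "j < 5" and "c j = 0" and "\<forall>m<5. m \<noteq> j \<longrightarrow> c m \<noteq> 0"
  shows "partials_independent (ftensor c) \<and>
         (\<exists>L :: nat \<Rightarrow> (complex^4^4) set.
            (\<forall>i<6. is_line (L i)) \<and> inj_on L {..<6} \<and>
            Hcone (ftensor c) \<inter> X2cone = (\<Union>i<6. L i))"
proof (intro conjI exI[of _ "\<lambda>i. supported_sums 4 (other_forms j) (coordinate_pair i)"])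
  note bi = biorthogonal_other_forms[OF assms(1)]
  show "partials_independent (ftensor c)"
    using partials_independent_ftensor[OF assms] .
  show "\<forall>i<6. is_line (supported_sums 4 (other_forms j) (coordinate_pair i))"
    using coordinate_pair_eq is_line_supported_sums[OF bi] by metis
  show "inj_on (\<lambda>i. supported_sums 4 (other_forms j) (coordinate_pair i)) {..<6}"
    using inj_on_coordinate_pair supported_sums_inj[OF bi] coordinate_pair_subset_card
    by (simp add: inj_on_def)
  show "Hcone (ftensor c) \<inter> X2cone = (\<Union>i<6. supported_sums 4 (other_forms j) (coordinate_pair i))"
    using Hcone_ftensor[OF assms] range_weighted_outer_sum_inter_X2cone[OF bi] by simp
qed

end
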